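(* Let $q>1$. For every integer $N\ge1$, $$H_{N+1}(x;q)=\frac{[N+1]_q}{N+1}\Big\{[2]_q x H_N(x;q)-2[N]_qH_{N-1}(x;q)-(q-1)[2]_q[N]_q x^2H_{N-1}(x;q)+[2]_q[N]_q!\sum_{k=0}^{N-2}\frac{(1-q^2)^{N-k}x^{N-k+1}H_k(x;q)}{[k]_q!\,[N-k+1]_q}\Big\},$$ where the sum is empty when $N=1$.
   Context: For $n\ge 0$ let $[n]_q=\frac{q^n-1}{q-1}$, $[0]_q!=1$, $[n]_q!=[1]_q\cdots[n]_q$, and $e_q(z)=\sum_{n\ge0}z^n/[n]_q!$. The $q$-Hermite polynomials $H_N(x;q)$ are defined by the identity of formal power series in $t$: $e^{-t^2}e_q([2]_q t x)=\sum_{N\ge0}H_N(x;q)\,t^N/[N]_q!$. *)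

theory Defs
  imports "HOL-Computational_Algebra.Formal_Power_Series"
begin

definition qint :: "real \<Rightarrow> nat \<Rightarrow> real" where
  "qint q n = (q ^ n - 1) / (q - 1)"

definition qfact :: "real \<Rightarrow> nat \<Rightarrow> real" where
  "qfact q n = (\<Prod>i=1..n. qint q i)"

definition qexp_fps :: "real \<Rightarrow> real fps" where
  "qexp_fps q = Abs_fps (\<lambda>n. 1 / qfact q n)"

definition qHermite_gf :: "real \<Rightarrow> real \<Rightarrow> real fps" where
  "qHermite_gf q x =
     fps_compose (fps_exp 1) (- (fps_X ^ 2)) *
     fps_compose (qexp_fps q) (fps_const (qint q 2 * x) * fps_X)"

definition qHermite :: "nat \<Rightarrow> real \<Rightarrow> real \<Rightarrow> real" where
  "qHermite N x q = qfact q N * fps_nth (qHermite_gf q x) N"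

end

theory Submission
  imports Defs
begin

unbundle fps_syntax

text \<open>
  Write \<open>G(t) = exp(-t^2) e_q(c t)\<close> with \<open>c = [2]_q x\<close>. Differentiating the
  \<open>q\<close>-difference equation \<open>e_q(q z) = (1 + (q - 1) z) e_q(z)\<close> shows that
  \<open>D = e_q' - e_q L\<close>, where \<open>L(z) = \<Sum>\<^sub>m (1 - q)^m z^m / [m + 1]_q\<close>, satisfies
  \<open>q D(q z) = (1 + (q - 1) z) D(z)\<close>, because \<open>q L(q z) - L(z) = (q - 1) / (1 + (q - 1) z)\<close>;
  comparing coefficients, this forces \<open>D = 0\<close>. Hence \<open>G' = G (c L(c t) - 2 t)\<close>, and the coefficient
  of \<open>t^N\<close> of this identity is the recurrence, since
  \<open>c^(m+1) (1 - q)^m = [2]_q (1 - q^2)^m x^(m+1)\<close>.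
\<close>

lemma qint_eq_sum: "q \<noteq> 1 \<Longrightarrow> qint q n = (\<Sum>i<n. q ^ i)"
  by (simp add: qint_def geometric_sum)

lemma qint_pos:
  assumes "q > 0" "q \<noteq> 1" "n \<ge> 1"
  shows "qint q n > 0"
  unfolding qint_eq_sum[OF assms(2)] using assms by (intro sum_pos) (auto simp: lessThan_empty_iff)

lemma qint_1: "q \<noteq> 1 \<Longrightarrow> qint q 1 = 1"
  by (simp add: qint_def)

lemma qint_2: "q \<noteq> 1 \<Longrightarrow> qint q 2 = 1 + q"
  by (simp add: qint_eq_sum numeral_2_eq_2)

lemma qfact_Suc: "qfact q (Suc n) = qfact q n * qint q (Suc n)"
  unfolding qfact_def by (simp add: prod.nat_ivl_Suc')

lemma qfact_pos: "q > 0 \<Longrightarrow> q \<noteq> 1 \<Longrightarrow> qfact q n > 0"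
  by (induction n) (auto simp: qfact_Suc qint_pos qfact_def)

definition qexp_log_deriv_fps :: "real \<Rightarrow> real fps" where
  "qexp_log_deriv_fps q = Abs_fps (\<lambda>m. (1 - q) ^ m / qint q (Suc m))"

lemma qexp_fps_dilate:
  assumes "q > 0" "q \<noteq> 1"
  shows "qexp_fps q oo (fps_const q * fps_X) = (1 + fps_const (q - 1) * fps_X) * qexp_fps q"
proof (rule fps_ext)
  fix n
  show "(qexp_fps q oo (fps_const q * fps_X)) $ n = ((1 + fps_const (q - 1) * fps_X) * qexp_fps q) $ n"
  proof (cases n)
    case (Suc m)
    have "qint q (Suc m) > 0" "qfact q m > 0"
      using assms by (simp_all add: qint_pos qfact_pos)
    moreover have "q ^ Suc m = 1 + (q - 1) * qint q (Suc m)"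
      using assms(2) by (simp add: qint_def)
    ultimately have "q ^ Suc m / qfact q (Suc m) = 1 / qfact q (Suc m) + (q - 1) / qfact q m"
      by (simp add: qfact_Suc add_divide_distrib)
    then show ?thesis
      using Suc by (simp add: qexp_fps_def distrib_right mult.assoc)
  qed (simp add: qexp_fps_def)
qed

lemma qexp_log_deriv_fps_dilate:
  assumes "q > 0" "q \<noteq> 1"
  defines "L \<equiv> qexp_log_deriv_fps q"
  shows "(1 + fps_const (q - 1) * fps_X) * (fps_const q * (L oo (fps_const q * fps_X)) - L)
           = fps_const (q - 1)"
proof -
  have ratio: "(q * q ^ m - 1) / qint q (Suc m) = q - 1" for m
    using assms power_eq_1_iff[of q "Suc m"] by (auto simp: qint_def)
  have "q * q ^ m * ((1 - q) ^ m / qint q (Suc m)) - (1 - q) ^ m / qint q (Suc m)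
          = (q * q ^ m - 1) / qint q (Suc m) * (1 - q) ^ m" for m
    by (simp add: diff_divide_distrib algebra_simps)
  then have diff: "fps_const q * (L oo (fps_const q * fps_X)) - L
                     = Abs_fps (\<lambda>m. (q - 1) * (1 - q) ^ m)"
    by (intro fps_ext) (simp add: L_def qexp_log_deriv_fps_def ratio mult.assoc)
  show ?thesis
    unfolding diff
  proof (rule fps_ext)
    fix n
    show "((1 + fps_const (q - 1) * fps_X) * Abs_fps (\<lambda>m. (q - 1) * (1 - q) ^ m)) $ n
            = fps_const (q - 1) $ n"
      by (cases n) (simp_all add: algebra_simps)
  qed
qed

lemma fps_eq_0_if_q_difference_eq:
  fixes D :: "real fps"
  assumes "q > 0" "q \<noteq> 1"
    and D: "fps_const q * (D oo (fps_const q * fps_X)) = (1 + fps_const (q - 1) * fps_X) * D"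
  shows "D = 0"
proof -
  have coeff: "q * q ^ n * D $ n = D $ n + (if n = 0 then 0 else (q - 1) * D $ (n - 1))" for n
    using arg_cong[OF D, of "\<lambda>f. f $ n"] by (cases n) (simp_all add: distrib_right mult.assoc)
  have "D $ n = 0" for n
  proof (induction n)
    case 0
    then show ?case using coeff[of 0] assms(2) by simp
  next
    case (Suc n)
    have "q * q ^ Suc n \<noteq> 1"
      using assms power_eq_1_iff[of q "Suc (Suc n)"] by auto
    then show ?case using coeff[of "Suc n"] Suc by (simp add: algebra_simps)
  qed
  then show ?thesis by (simp add: fps_eq_iff)
qed

lemma qexp_fps_deriv:
  assumes "q > 0" "q \<noteq> 1"
  shows "fps_deriv (qexp_fps q) = qexp_fps q * qexp_log_deriv_fps q"
proof -
  define E where "E = qexp_fps q"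
  define L where "L = qexp_log_deriv_fps q"
  define P where "P = 1 + fps_const (q - 1) * (fps_X :: real fps)"
  define s where "s = fps_const q * (fps_X :: real fps)"
  define D where "D = fps_deriv E - E * L"
  have s0: "s $ 0 = 0" by (simp add: s_def)
  have Es: "E oo s = P * E"
    unfolding E_def s_def P_def using qexp_fps_dilate[OF assms] .
  have Ls: "P * (fps_const q * (L oo s)) = P * L + fps_const (q - 1)"
    using qexp_log_deriv_fps_dilate[OF assms] unfolding L_def P_def s_def by (simp add: algebra_simps)
  have Ds: "D oo s = (fps_deriv E oo s) - (E oo s) * (L oo s)"
    by (simp add: D_def fps_compose_sub_distrib fps_compose_mult_distrib[OF s0])
  have dEs: "fps_deriv (E oo s) = (fps_deriv E oo s) * fps_const q"
    using fps_compose_deriv[OF s0, of E] by (simp add: s_def)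
  have "fps_const q * (D oo s) = fps_deriv (E oo s) - (E oo s) * (fps_const q * (L oo s))"
    unfolding Ds dEs by (simp add: algebra_simps)
  also have "\<dots> = fps_deriv (P * E) - E * (P * (fps_const q * (L oo s)))"
    unfolding Es by (simp add: algebra_simps)
  also have "\<dots> = P * D"
    unfolding Ls Es D_def by (simp add: P_def algebra_simps)
  finally have "D = 0"
    using fps_eq_0_if_q_difference_eq[OF assms] by (simp add: s_def P_def)
  then show ?thesis by (simp add: D_def E_def L_def)
qed

lemma qHermite_gf_deriv:
  fixes q x :: real
  assumes "q > 0" "q \<noteq> 1"
  defines "c \<equiv> qint q 2 * x"
  shows "fps_deriv (qHermite_gf q x) =
    qHermite_gf q x * (fps_const c * (qexp_log_deriv_fps q oo (fps_const c * fps_X)) - 2 * fps_X)"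
proof -
  define A where "A = fps_exp (1::real) oo - (fps_X ^ 2)"
  define B where "B = qexp_fps q oo (fps_const c * fps_X)"
  have A0: "(- (fps_X ^ 2 :: real fps)) $ 0 = 0" and B0: "(fps_const c * fps_X :: real fps) $ 0 = 0"
    by simp_all
  have dA: "fps_deriv A = A * (- (2 * fps_X))"
    unfolding A_def fps_compose_deriv[OF A0] by (simp add: power2_eq_square algebra_simps)
  have dB: "fps_deriv B = B * (fps_const c * (qexp_log_deriv_fps q oo (fps_const c * fps_X)))"
    unfolding B_def fps_compose_deriv[OF B0] qexp_fps_deriv[OF assms(1,2)] fps_compose_mult_distrib[OF B0]
    by (simp add: algebra_simps)
  have "qHermite_gf q x = A * B"
    unfolding qHermite_gf_def A_def B_def c_def ..
  then show ?thesis by (simp add: dA dB algebra_simps)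
qed

lemma qexp_log_deriv_scaled_nth:
  assumes "q \<noteq> 1"
  shows "(fps_const (qint q 2 * x) * (qexp_log_deriv_fps q oo (fps_const (qint q 2 * x) * fps_X))) $ m
           = qint q 2 * (1 - q ^ 2) ^ m * x ^ (m + 1) / qint q (m + 1)"
proof -
  have "(1 - q ^ 2) ^ m = (1 + q) ^ m * (1 - q) ^ m"
    by (simp add: power_mult_distrib[symmetric] power2_eq_square algebra_simps)
  then show ?thesis
    by (simp add: qexp_log_deriv_fps_def qint_2[OF assms] power_mult_distrib)
qed

lemma qHermite_gf_coeff_rec:
  fixes q x :: real
  assumes "q > 0" "q \<noteq> 1" "N \<ge> 1"
  defines "h \<equiv> fps_nth (qHermite_gf q x)"
  shows "real (N + 1) * h (N + 1) =
      qint q 2 * x * h N - 2 * h (N - 1) - (q - 1) * qint q 2 * x ^ 2 * h (N - 1)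
      + qint q 2 * (\<Sum>k<N - 1. (1 - q ^ 2) ^ (N - k) * x ^ (N - k + 1) * h k / qint q (N - k + 1))"
proof -
  obtain n where N: "N = Suc n" using assms(3) by (cases N) auto
  define c where "c = qint q 2 * x"
  define M where "M = fps_const c * (qexp_log_deriv_fps q oo (fps_const c * fps_X))"
  have M: "M $ m = qint q 2 * (1 - q ^ 2) ^ m * x ^ (m + 1) / qint q (m + 1)" for m
    unfolding M_def c_def using qexp_log_deriv_scaled_nth[OF assms(2)] .
  have "qint q (Suc 0) = 1" "qint q (Suc (Suc 0)) = 1 + q"
    using qint_1[OF assms(2)] qint_2[OF assms(2)] by (simp_all add: numeral_2_eq_2)
  then have M0: "M $ 0 = qint q 2 * x" and M1: "M $ 1 = - ((q - 1) * qint q 2 * x ^ 2)"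
    using assms(1) by (simp_all add: M qint_2[OF assms(2)] power2_eq_square field_simps)
  have "real (N + 1) * h (N + 1) = (qHermite_gf q x * M) $ N - 2 * h n"
    using arg_cong[OF qHermite_gf_deriv[OF assms(1,2), of x], of "\<lambda>f. f $ N"]
    by (simp add: N h_def M_def c_def algebra_simps numeral_fps_const)
  also have "(qHermite_gf q x * M) $ N = (\<Sum>i\<le>N. h i * M $ (N - i))"
    by (simp add: fps_mult_nth h_def atLeast0AtMost)
  also have "\<dots> = (\<Sum>k<n. h k * M $ (N - k)) + h n * M $ 1 + h N * M $ 0"
    by (simp add: N lessThan_Suc_atMost[symmetric])
  finally show ?thesis
    unfolding M0 M1 by (simp add: N M sum_distrib_left algebra_simps)
qed

theorem mainTheorem4:
  fixes q x :: real and N :: nat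
  assumes "q > 1" and "N \<ge> 1"
  shows "qHermite (N + 1) x q =
    qint q (N + 1) / real (N + 1) *
      ( qint q 2 * x * qHermite N x q
      - 2 * qint q N * qHermite (N - 1) x q
      - (q - 1) * qint q 2 * qint q N * x ^ 2 * qHermite (N - 1) x q
      + qint q 2 * qfact q N *
          (\<Sum>k<N - 1. (1 - q ^ 2) ^ (N - k) * x ^ (N - k + 1) * qHermite k x q
                        / (qfact q k * qint q (N - k + 1))) )"
proof -
  have q: "q > 0" "q \<noteq> 1" using assms(1) by auto
  define h where "h = fps_nth (qHermite_gf q x)"
  have H: "qHermite k x q = qfact q k * h k" for k
    by (simp add: qHermite_def h_def)
  have h: "h k = qHermite k x q / qfact q k" for k
    using qfact_pos[OF q, of k] by (simp add: H)
  obtain n where N: "N = Suc n" using assms(2) by (cases N) auto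
  have sum_h: "(\<Sum>k<N - 1. (1 - q ^ 2) ^ (N - k) * x ^ (N - k + 1) * h k / qint q (N - k + 1)) =
      (\<Sum>k<N - 1. (1 - q ^ 2) ^ (N - k) * x ^ (N - k + 1) * qHermite k x q
                    / (qfact q k * qint q (N - k + 1)))"
    by (simp add: h)
  have "qHermite (N + 1) x q = qint q (N + 1) / real (N + 1) * (qfact q N * (real (N + 1) * h (N + 1)))"
    by (simp add: H qfact_Suc)
  also have "qfact q N * (real (N + 1) * h (N + 1)) =
      qint q 2 * x * qHermite N x q
      - 2 * qint q N * qHermite (N - 1) x q
      - (q - 1) * qint q 2 * qint q N * x ^ 2 * qHermite (N - 1) x q
      + qint q 2 * qfact q N *
          (\<Sum>k<N - 1. (1 - q ^ 2) ^ (N - k) * x ^ (N - k + 1) * qHermite k x q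
                        / (qfact q k * qint q (N - k + 1)))"
    unfolding qHermite_gf_coeff_rec[OF q assms(2), where x = x, folded h_def] sum_h
    by (simp add: N H[of "Suc n"] H[of n] qfact_Suc algebra_simps)
  finally show ?thesis .
qed

end
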